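(* Consider the iterates $\{x(t)\}$ of the asynchronous network Newton method described in the context, with arbitrary $x(0)\in\mathbb{R}^n$, in a network with $n\ge 2$ agents. If $$0<\varepsilon<\min\left\{1,\;2\left(\frac{\lambda}{\Lambda}\right)^2\right\},$$ then for all $t\ge0$ $$\mathbb{E}\big[F(x(t))-F^*\big]\le(1-\beta)^t\big(F(x(0))-F^*\big),\qquad \beta=\frac{\alpha m\,\varepsilon\,(2\lambda^2-\varepsilon\Lambda^2)}{n\lambda},$$ and $0<\beta<1$.
   Context: Setup. Let $n\ge 1$ be the number of agents and $\alpha>0$ a scalar. $W\in\mathbb{R}^{n\times n}$ is a symmetric nonnegative matrix with $W\mathbb{1}=\mathbb{1}$ (where $\mathbb{1}$ is the all-ones vector), $\mathrm{null}(I-W)=\mathrm{span}\{\mathbb{1}\}$, $0\le W_{ij}<1$ for all $i,j$, and $\delta\le W_{ii}\le\Delta$ for all $i$, for constants $0<\delta\le\Delta<1$. Each $f_i:\mathbb{R}\to\mathbb{R}$ is twice continuously differentiable with $0<m\le f_i''(s)\le M<\infty$ for all $s$ and $|f_i''(a)-f_i''(b)|\le L|a-b|$ for all $a,b$. Define $F(x)=\frac12 x^T(I-W)x+\alpha\sum_{i=1}^n f_i(x_i)$ for $x\in\mathbb{R}^n$, with minimum value $F^*$ and minimizer $x^*$. Let $g(x)=\nabla F(x)$, $G(x)=\mathrm{diag}(f_1''(x_1),\dots,f_n''(x_n))$, $H(x)=\nabla^2F(x)=I-W+\alpha G(x)$. Let $W_d$ be the diagonal matrix with $[W_d]_{ii}=W_{ii}$,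 and set $D(x)=\alpha G(x)+2(I-W_d)$ (diagonal, positive definite) and $B=I-2W_d+W$, so $H(x)=D(x)-B$. Define the approximate Hessian inverse $\hat H(x)^{-1}=D(x)^{-1/2}\big(I+D(x)^{-1/2}BD(x)^{-1/2}\big)D(x)^{-1/2}$. Constants: $\rho=\frac{2(1-\delta)}{2(1-\delta)+\alpha m}$, $\Lambda=\frac{1+\rho}{2(1-\Delta)+\alpha m}$, $\lambda=\frac{1}{2(1-\delta)+\alpha M}$. Algorithm (asynchronous network Newton). Given $x(0)\in\mathbb{R}^n$ and stepsize $\varepsilon>0$, let $\Phi(1),\Phi(2),\dots$ be i.i.d. random diagonal $n\times n$ matrices, each equal to $e_ie_i^T$ (the matrix with a single $1$ in position $(i,i)$ and zeros elsewhere) with probability $1/n$ for each $i=1,\dots,n$ (i.e., one uniformly random agent is active per iteration). The iterates are $x(t)=x(t-1)-\varepsilon\,\Phi(t)\hat H(x(t-1))^{-1}g(x(t-1))$, $t\ge1$. Write $g(t)=g(x(t))$, $D(t)=D(x(t))$, $H(t)=H(x(t))$, $\hat H(t)^{-1}=\hat H(x(t))^{-1}$. $\mathcal{F}_t$ denotes the $\sigma$-field generated by $\Phi(1),\dots,\Phi(t)$ (so $x(t)$ is $\mathcal{F}_t$-measurable). *)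

theory Defs
  imports "HOL-Analysis.Analysis" "HOL-Probability.Probability"
begin

text \<open>Agents are indexed by a finite type 'n (so n = CARD('n)); vectors are real^'n and
  matrices real^'n^'n. The local functions are f i, with first and second derivatives
  f1 i and f2 i.\<close>

definition diagm :: "real^'n \<Rightarrow> real^'n^'n" where
  "diagm v = (\<chi> i j. if i = j then v $ i else 0)"

definition onesv :: "real^'n" where
  "onesv = (\<chi> i. 1)"

definition Fobj :: "real^'n^'n \<Rightarrow> real \<Rightarrow> ('n \<Rightarrow> real \<Rightarrow> real) \<Rightarrow> real^'n \<Rightarrow> real" where
  "Fobj W \<alpha> f x = (1/2) * (x \<bullet> ((mat 1 - W) *v x)) + \<alpha> * (\<Sum>i\<in>UNIV. f i (x $ i))"

definition Fstar :: "real^'n^'n \<Rightarrow> real \<Rightarrow> ('n \<Rightarrow> real \<Rightarrow> real) \<Rightarrow> real" where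
  "Fstar W \<alpha> f = (INF x. Fobj W \<alpha> f x)"

definition gradF :: "real^'n^'n \<Rightarrow> real \<Rightarrow> ('n \<Rightarrow> real \<Rightarrow> real) \<Rightarrow> real^'n \<Rightarrow> real^'n" where
  "gradF W \<alpha> f1 x = (mat 1 - W) *v x + \<alpha> *\<^sub>R (\<chi> i. f1 i (x $ i))"

definition Wdiag :: "real^'n^'n \<Rightarrow> real^'n^'n" where
  "Wdiag W = diagm (\<chi> i. W $ i $ i)"

definition Dvec :: "real^'n^'n \<Rightarrow> real \<Rightarrow> ('n \<Rightarrow> real \<Rightarrow> real) \<Rightarrow> real^'n \<Rightarrow> real^'n" where
  "Dvec W \<alpha> f2 x = (\<chi> i. \<alpha> * f2 i (x $ i) + 2 * (1 - W $ i $ i))"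

definition Dmat :: "real^'n^'n \<Rightarrow> real \<Rightarrow> ('n \<Rightarrow> real \<Rightarrow> real) \<Rightarrow> real^'n \<Rightarrow> real^'n^'n" where
  "Dmat W \<alpha> f2 x = diagm (Dvec W \<alpha> f2 x)"

definition Dinvsqrt :: "real^'n^'n \<Rightarrow> real \<Rightarrow> ('n \<Rightarrow> real \<Rightarrow> real) \<Rightarrow> real^'n \<Rightarrow> real^'n^'n" where
  "Dinvsqrt W \<alpha> f2 x = diagm (\<chi> i. 1 / sqrt (Dvec W \<alpha> f2 x $ i))"

definition Bmat :: "real^'n^'n \<Rightarrow> real^'n^'n" where
  "Bmat W = mat 1 - 2 *\<^sub>R Wdiag W + W"

definition Hhat_inv :: "real^'n^'n \<Rightarrow> real \<Rightarrow> ('n \<Rightarrow> real \<Rightarrow> real) \<Rightarrow> real^'n \<Rightarrow> real^'n^'n" where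
  "Hhat_inv W \<alpha> f2 x =
     Dinvsqrt W \<alpha> f2 x ** (mat 1 + Dinvsqrt W \<alpha> f2 x ** Bmat W ** Dinvsqrt W \<alpha> f2 x)
       ** Dinvsqrt W \<alpha> f2 x"

definition Phi :: "'n \<Rightarrow> real^'n^'n" where
  "Phi i = diagm (\<chi> j. if j = i then 1 else 0)"

definition ann_step :: "real^'n^'n \<Rightarrow> real \<Rightarrow> ('n \<Rightarrow> real \<Rightarrow> real) \<Rightarrow> ('n \<Rightarrow> real \<Rightarrow> real)
    \<Rightarrow> real \<Rightarrow> 'n \<Rightarrow> real^'n \<Rightarrow> real^'n" where
  "ann_step W \<alpha> f1 f2 \<epsilon> i x = x - \<epsilon> *\<^sub>R (Phi i *v (Hhat_inv W \<alpha> f2 x *v gradF W \<alpha> f1 x))"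

text \<open>Distribution of x(t): Phi(1), Phi(2), ... i.i.d., each e_i e_i^T with probability 1/n.\<close>
primrec ann_dist :: "real^'n^'n \<Rightarrow> real \<Rightarrow> ('n::finite \<Rightarrow> real \<Rightarrow> real) \<Rightarrow> ('n \<Rightarrow> real \<Rightarrow> real)
    \<Rightarrow> real \<Rightarrow> real^'n \<Rightarrow> nat \<Rightarrow> (real^'n) pmf" where
  "ann_dist W \<alpha> f1 f2 \<epsilon> x0 0 = return_pmf x0"
| "ann_dist W \<alpha> f1 f2 \<epsilon> x0 (Suc t) =
     bind_pmf (ann_dist W \<alpha> f1 f2 \<epsilon> x0 t)
       (\<lambda>x. map_pmf (\<lambda>i. ann_step W \<alpha> f1 f2 \<epsilon> i x) (pmf_of_set UNIV))"

definition rho_c :: "real \<Rightarrow> real \<Rightarrow> real \<Rightarrow> real" where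
  "rho_c \<delta> \<alpha> m = 2 * (1 - \<delta>) / (2 * (1 - \<delta>) + \<alpha> * m)"

definition Lambda_c :: "real \<Rightarrow> real \<Rightarrow> real \<Rightarrow> real \<Rightarrow> real" where
  "Lambda_c \<delta> \<Delta> \<alpha> m = (1 + rho_c \<delta> \<alpha> m) / (2 * (1 - \<Delta>) + \<alpha> * m)"

definition lambda_c :: "real \<Rightarrow> real \<Rightarrow> real \<Rightarrow> real" where
  "lambda_c \<delta> \<alpha> M = 1 / (2 * (1 - \<delta>) + \<alpha> * M)"

end

theory Submission
  imports Defs
begin

text \<open>
  Both \<open>I - W\<close> and \<open>B\<close> are symmetric and diagonally
  dominant, hence positive semidefinite, and \<open>B = 2 (I - W\<^sub>d) - (I - W)\<close>. So the quadratic
  form of \<open>Hhat_inv x\<close> lies between \<open>\<Sum> v\<^sub>i\<^sup>2 / d\<^sub>i\<close> and \<open>\<Sum> (1/d\<^sub>i + 2 (1 - W\<^sub>i\<^sub>i)/d\<^sub>i\<^sup>2) v\<^sub>i\<^sup>2\<close>,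
  i.e. in \<open>[\<lambda>, \<Lambda>]\<close>, and \<open>\<bar>Hhat_inv x v\<bar>\<^sup>2 \<le> \<Lambda>\<^sup>2 \<bar>v\<bar>\<^sup>2\<close>.
  A Taylor bound along coordinate \<open>i\<close> shows that activating agent \<open>i\<close> with direction
  \<open>d = Hhat_inv x g\<close> decreases \<open>F\<close> by at least \<open>\<epsilon> d\<^sub>i g\<^sub>i - \<epsilon>\<^sup>2 d\<^sub>i\<^sup>2 / (2 \<lambda>)\<close>. Averaging over
  the \<open>n\<close> agents gives the expected decrease \<open>(\<epsilon> \<lambda> - \<epsilon>\<^sup>2 \<Lambda>\<^sup>2 / (2 \<lambda>)) \<bar>g\<bar>\<^sup>2 / n\<close>, and
  strong convexity gives the Polyak--Lojasiewicz inequality \<open>\<bar>g\<bar>\<^sup>2 \<ge> 2 \<alpha> m (F - F\<^sup>*)\<close>,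
  so the optimality gap contracts by \<open>1 - \<beta>\<close> in expectation at every step.
\<close>

lemma quadratic_taylor_bounds:
  fixes f f' f'' :: "real \<Rightarrow> real" and m M x y :: real
  assumes f': "\<And>s. (f has_real_derivative f' s) (at s)"
    and f'': "\<And>s. (f' has_real_derivative f'' s) (at s)"
    and bounds: "\<And>s. m \<le> f'' s \<and> f'' s \<le> M"
  shows "f x + f' x * (y - x) + m / 2 * (y - x)\<^sup>2 \<le> f y"
    and "f y \<le> f x + f' x * (y - x) + M / 2 * (y - x)\<^sup>2"
proof -
  obtain t where "f y = f x + f' x * (y - x) + f'' t / 2 * (y - x)\<^sup>2"
  proof (cases "y = x")
    case False
    define diff where "diff = (\<lambda>k::nat. if k = 0 then f else if k = 1 then f' else f'')"
    have "\<exists>t. (if y < x then y < t \<and> t < x else x < t \<and> t < y) \<and>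
        f y = (\<Sum>k<2. diff k x / fact k * (y - x) ^ k) + diff 2 t / fact 2 * (y - x)\<^sup>2"
      by (rule Taylor[of 2 diff f "min x y" "max x y"])
        (use f' f'' False in \<open>auto simp: diff_def less_2_cases_iff\<close>)
    then show ?thesis
      using that by (auto simp: diff_def numeral_2_eq_2)
  qed (use that in simp)
  with bounds[of t] show "f x + f' x * (y - x) + m / 2 * (y - x)\<^sup>2 \<le> f y"
    and "f y \<le> f x + f' x * (y - x) + M / 2 * (y - x)\<^sup>2"
    by (auto intro: mult_right_mono)
qed

lemma inner_matrix_vector_eq_double_sum:
  "(z::real^'n) \<bullet> (A *v z) = (\<Sum>i\<in>UNIV. \<Sum>j\<in>UNIV. z$i * A$i$j * z$j)"
  by (simp add: inner_vec_def matrix_vector_mult_def sum_distrib_left mult.assoc)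

lemma inner_symmetric_matrix:
  assumes "transpose A = (A::real^'n^'n)"
  shows "x \<bullet> (A *v y) = (A *v x) \<bullet> y"
  by (metis assms dot_lmul_matrix vector_transpose_matrix)

lemma symmetric_matrix_entry: "transpose A = A \<Longrightarrow> A$i$j = A$j$i"
  by (metis transpose_def vec_lambda_beta)

lemma sum_remove_diagonal:
  fixes a :: "'n::finite \<Rightarrow> real"
  shows "(\<Sum>j\<in>UNIV. a j) = a i + (\<Sum>j\<in>-{i}. a j)"
  by (simp add: sum.remove[of UNIV i] Compl_eq_Diff_UNIV)

text \<open>Each off-diagonal term is bounded below by \<open>-\<bar>a\<^sub>i\<^sub>j\<bar> (z\<^sub>i\<^sup>2 + z\<^sub>j\<^sup>2) / 2\<close>; by symmetry
  the two halves add up to \<open>\<Sum>\<^sub>i (\<Sum>\<^sub>j\<^sub>\<noteq>\<^sub>i \<bar>a\<^sub>i\<^sub>j\<bar>) z\<^sub>i\<^sup>2\<close>, which the diagonal dominates.\<close>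

lemma diagonally_dominant_psd:
  fixes A :: "real^'n^'n"
  assumes sym: "transpose A = A"
    and dominant: "\<And>i. (\<Sum>j\<in>-{i}. \<bar>A$i$j\<bar>) \<le> A$i$i"
  shows "0 \<le> z \<bullet> (A *v z)"
proof -
  define off where "off i j = (if i = j then 0 else \<bar>A$i$j\<bar>)" for i j
  have off_sym: "off i j = off j i" for i j
    using symmetric_matrix_entry[OF sym] by (simp add: off_def)
  have off_sum: "(\<Sum>j\<in>UNIV. off i j * c) = (\<Sum>j\<in>-{i}. \<bar>A$i$j\<bar>) * c" for i c
    by (simp add: sum_remove_diagonal[of _ i] off_def sum_distrib_right)
  have entry: "A$i$i * (z$i)\<^sup>2 * of_bool (i = j) - off i j * ((z$i)\<^sup>2 + (z$j)\<^sup>2) / 2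
      \<le> z$i * A$i$j * z$j" for i j
  proof (cases "i = j")
    case False
    have "- \<bar>A$i$j\<bar> * ((z$i)\<^sup>2 + (z$j)\<^sup>2) / 2 \<le> z$i * A$i$j * z$j"
    proof -
      have "2 * \<bar>z$i * z$j\<bar> \<le> (z$i)\<^sup>2 + (z$j)\<^sup>2"
        using sum_squares_bound[of "\<bar>z$i\<bar>" "\<bar>z$j\<bar>"] by (simp add: abs_mult)
      then have "\<bar>A$i$j\<bar> * (2 * \<bar>z$i * z$j\<bar>) \<le> \<bar>A$i$j\<bar> * ((z$i)\<^sup>2 + (z$j)\<^sup>2)"
        by (rule mult_left_mono) simp
      moreover have "- (\<bar>A$i$j\<bar> * \<bar>z$i * z$j\<bar>) \<le> z$i * A$i$j * z$j"
        using abs_ge_minus_self[of "z$i * A$i$j * z$j"] by (simp add: abs_mult mult_ac)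
      ultimately show ?thesis by linarith
    qed
    then show ?thesis using False by (simp add: off_def)
  qed (simp add: off_def power2_eq_square)
  have swap: "(\<Sum>i\<in>UNIV. \<Sum>j\<in>UNIV. off i j * (z$j)\<^sup>2) = (\<Sum>i\<in>UNIV. \<Sum>j\<in>UNIV. off i j * (z$i)\<^sup>2)"
    by (subst sum.swap) (simp add: off_sym)
  have "(\<Sum>i\<in>UNIV. \<Sum>j\<in>UNIV.
        A$i$i * (z$i)\<^sup>2 * of_bool (i = j) - off i j * ((z$i)\<^sup>2 + (z$j)\<^sup>2) / 2)
      = (\<Sum>i\<in>UNIV. A$i$i * (z$i)\<^sup>2)
        - ((\<Sum>i\<in>UNIV. \<Sum>j\<in>UNIV. off i j * (z$i)\<^sup>2) + (\<Sum>i\<in>UNIV. \<Sum>j\<in>UNIV. off i j * (z$j)\<^sup>2)) / 2"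
    by (simp add: sum_subtractf sum.distrib add_divide_distrib distrib_left sum_divide_distrib)
  also have "\<dots> = (\<Sum>i\<in>UNIV. (A$i$i - (\<Sum>j\<in>-{i}. \<bar>A$i$j\<bar>)) * (z$i)\<^sup>2)"
    by (simp add: swap off_sum left_diff_distrib sum_subtractf)
  finally have "(\<Sum>i\<in>UNIV. (A$i$i - (\<Sum>j\<in>-{i}. \<bar>A$i$j\<bar>)) * (z$i)\<^sup>2) = (\<Sum>i\<in>UNIV. \<Sum>j\<in>UNIV.
        A$i$i * (z$i)\<^sup>2 * of_bool (i = j) - off i j * ((z$i)\<^sup>2 + (z$j)\<^sup>2) / 2)" ..
  moreover have "0 \<le> (\<Sum>i\<in>UNIV. (A$i$i - (\<Sum>j\<in>-{i}. \<bar>A$i$j\<bar>)) * (z$i)\<^sup>2)"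
    using dominant by (intro sum_nonneg mult_nonneg_nonneg) auto
  ultimately have "0 \<le> (\<Sum>i\<in>UNIV. \<Sum>j\<in>UNIV.
        A$i$i * (z$i)\<^sup>2 * of_bool (i = j) - off i j * ((z$i)\<^sup>2 + (z$j)\<^sup>2) / 2)" by simp
  also have "\<dots> \<le> z \<bullet> (A *v z)"
    unfolding inner_matrix_vector_eq_double_sum by (intro sum_mono entry)
  finally show ?thesis .
qed

lemma psd_cauchy_schwarz:
  fixes A :: "real^'n^'n"
  assumes sym: "transpose A = A" and psd: "\<And>v. 0 \<le> v \<bullet> (A *v v)"
  shows "(u \<bullet> (A *v v))\<^sup>2 \<le> (u \<bullet> (A *v u)) * (v \<bullet> (A *v v))"
proof -
  define a b e where "a = u \<bullet> (A *v u)" and "b = u \<bullet> (A *v v)" and "e = v \<bullet> (A *v v)"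
  have quadratic: "0 \<le> a + 2 * t * b + t\<^sup>2 * e" for t
  proof -
    have "v \<bullet> (A *v u) = b"
      using inner_symmetric_matrix[OF sym, of v u] by (simp add: b_def inner_commute)
    then have "(u + t *\<^sub>R v) \<bullet> (A *v (u + t *\<^sub>R v)) = a + 2 * t * b + t\<^sup>2 * e"
      by (simp add: a_def b_def e_def matrix_vector_right_distrib matrix_vector_mult_scaleR
          inner_add_left inner_add_right power2_eq_square algebra_simps)
    then show ?thesis using psd[of "u + t *\<^sub>R v"] by simp
  qed
  show ?thesis
  proof (cases "e = 0")
    case True
    have "b = 0"
    proof (rule ccontr)
      assume "b \<noteq> 0"
      with quadratic[of "- (a + 1) / (2 * b)"] True show False by (simp add: field_simps)
    qed
    then show ?thesis using psd[of u] psd[of v] by (simp add: b_def)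
  next
    case False
    then have "0 < e" using psd[of v] by (simp add: e_def)
    with quadratic[of "- b / e"] have "0 \<le> a - b\<^sup>2 / e"
      by (simp add: field_simps power2_eq_square)
    with \<open>0 < e\<close> show ?thesis by (simp add: a_def b_def e_def field_simps)
  qed
qed

lemma psd_matrix_vector_norm_le:
  fixes A :: "real^'n^'n"
  assumes sym: "transpose A = A" and psd: "\<And>v. 0 \<le> v \<bullet> (A *v v)"
    and upper: "\<And>v. v \<bullet> (A *v v) \<le> c * (v \<bullet> v)"
  shows "(A *v v) \<bullet> (A *v v) \<le> c\<^sup>2 * (v \<bullet> v)"
proof -
  define u where "u = A *v v"
  have "(u \<bullet> u)\<^sup>2 \<le> (u \<bullet> (A *v u)) * (v \<bullet> (A *v v))"
    using psd_cauchy_schwarz[OF sym psd, of u v] by (simp add: u_def)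
  also have "\<dots> \<le> (c * (u \<bullet> u)) * (c * (v \<bullet> v))"
    using psd upper by (intro mult_mono) (auto intro: order_trans)
  finally have "(u \<bullet> u) * (u \<bullet> u) \<le> (u \<bullet> u) * (c\<^sup>2 * (v \<bullet> v))"
    by (simp add: power2_eq_square mult_ac)
  then show ?thesis
    by (cases "u \<bullet> u = 0") (auto simp: u_def mult_le_cancel_left)
qed

lemma diagm_mult_vector: "diagm p *v v = (\<chi> i. p$i * v$i)"
  by (simp add: diagm_def matrix_vector_mult_def vec_eq_iff if_distrib if_distribR cong: if_cong)

lemma transpose_diagm [simp]: "transpose (diagm p) = diagm p"
  by (simp add: diagm_def transpose_def vec_eq_iff)

lemma inner_diagm: "(v::real^'n) \<bullet> (diagm p *v v) = (\<Sum>i\<in>UNIV. p$i * (v$i)\<^sup>2)"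
  by (simp add: diagm_mult_vector inner_vec_def power2_eq_square mult_ac)

lemma Phi_mult_vector: "Phi i *v v = v$i *\<^sub>R axis i 1"
  by (simp add: Phi_def diagm_mult_vector vec_eq_iff axis_def)

lemma inner_scaled_axis_matrix_vector:
  "(s *\<^sub>R axis i 1) \<bullet> (A *v (s *\<^sub>R axis i 1)) = s\<^sup>2 * (A$i$i :: real)"
  by (simp add: matrix_vector_mult_scaleR matrix_vector_mult_basis inner_axis' column_def
      power2_eq_square)

lemma transpose_sandwich:
  fixes P B :: "real^'n^'n"
  assumes "transpose P = P" "transpose B = B"
  shows "transpose (P ** (mat 1 + P ** B ** P) ** P) = P ** (mat 1 + P ** B ** P) ** P"
proof -
  have transpose_add: "transpose (X + Y) = transpose X + transpose Y" for X Y :: "real^'n^'n"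
    by (simp add: transpose_def vec_eq_iff)
  show ?thesis using assms by (simp add: matrix_transpose_mul transpose_add matrix_mul_assoc)
qed

lemma sandwich_quadratic_form:
  fixes d v :: "real^'n" and B :: "real^'n^'n"
  assumes pos: "\<And>i. 0 < d$i" and sym: "transpose B = B"
  defines "P \<equiv> diagm (\<chi> i. 1 / sqrt (d$i))"
  shows "v \<bullet> ((P ** (mat 1 + P ** B ** P) ** P) *v v)
      = (\<Sum>i\<in>UNIV. (v$i)\<^sup>2 / d$i) + (\<chi> i. v$i / d$i) \<bullet> (B *v (\<chi> i. v$i / d$i))"
proof -
  have P_sym: "transpose P = P" by (simp add: P_def)
  define w where "w = P *v v"
  have Pw: "P *v w = (\<chi> i. v$i / d$i)"
    using pos by (simp add: w_def P_def diagm_mult_vector vec_eq_iff less_imp_le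
        flip: real_sqrt_mult)
  have ww: "w \<bullet> w = (\<Sum>i\<in>UNIV. (v$i)\<^sup>2 / d$i)"
    using pos by (simp add: w_def P_def diagm_mult_vector inner_vec_def power2_eq_square
        less_imp_le flip: real_sqrt_mult)
  have "v \<bullet> ((P ** (mat 1 + P ** B ** P) ** P) *v v) = v \<bullet> (P *v ((mat 1 + P ** B ** P) *v w))"
    by (simp add: w_def matrix_vector_mul_assoc matrix_mul_assoc)
  also have "\<dots> = w \<bullet> ((mat 1 + P ** B ** P) *v w)"
    using inner_symmetric_matrix[OF P_sym] by (simp add: w_def)
  also have "\<dots> = w \<bullet> w + w \<bullet> (P *v (B *v (P *v w)))"
    by (simp add: matrix_vector_mult_add_rdistrib inner_add_right matrix_vector_mul_assoc
        matrix_mul_assoc)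
  also have "\<dots> = w \<bullet> w + (P *v w) \<bullet> (B *v (P *v w))"
    using inner_symmetric_matrix[OF P_sym] by simp
  finally show ?thesis by (simp add: Pw ww)
qed

lemma stochastic_row_sum:
  assumes "W *v onesv = onesv"
  shows "(\<Sum>j\<in>UNIV. W$i$j) = (1::real)"
  using arg_cong[OF assms, of "\<lambda>v. v $ i"] by (simp add: matrix_vector_mult_def onesv_def)

lemma stochastic_offdiag_sum:
  fixes W :: "real^'n^'n"
  assumes nonneg: "\<And>i j. 0 \<le> W$i$j" and stochastic: "W *v onesv = onesv"
  shows "(\<Sum>j\<in>-{i}. \<bar>W$i$j\<bar>) = 1 - W$i$i"
  using stochastic_row_sum[OF stochastic, of i] sum_remove_diagonal[of "\<lambda>j. W$i$j" i] nonneg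
  by simp

lemma transpose_I_minus: "transpose W = W \<Longrightarrow> transpose (mat 1 - W) = mat 1 - (W::real^'n^'n)"
  by (auto simp: transpose_def mat_def vec_eq_iff dest: symmetric_matrix_entry)

lemma I_minus_stochastic_psd:
  fixes W :: "real^'n^'n"
  assumes sym: "transpose W = W" and nonneg: "\<And>i j. 0 \<le> W$i$j"
    and stochastic: "W *v onesv = onesv"
  shows "0 \<le> z \<bullet> ((mat 1 - W) *v z)"
proof (rule diagonally_dominant_psd)
  show "transpose (mat 1 - W) = mat 1 - W"
    using sym by (rule transpose_I_minus)
  have "(\<Sum>j\<in>-{i}. \<bar>(mat 1 - W)$i$j\<bar>) = (\<Sum>j\<in>-{i}. \<bar>W$i$j\<bar>)" for i
    by (intro sum.cong) (auto simp: mat_def)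
  then show "(\<Sum>j\<in>-{i}. \<bar>(mat 1 - W)$i$j\<bar>) \<le> (mat 1 - W)$i$i" for i
    using stochastic_offdiag_sum[OF nonneg stochastic, of i] by (simp add: mat_def)
qed

lemma Bmat_entry: "Bmat W $ i $ j = (if i = j then 1 - W$i$i else W$i$j)"
  by (simp add: Bmat_def Wdiag_def diagm_def mat_def)

lemma transpose_Bmat: "transpose W = W \<Longrightarrow> transpose (Bmat W) = Bmat (W::real^'n^'n)"
  by (auto simp: transpose_def Bmat_entry vec_eq_iff dest: symmetric_matrix_entry)

lemma Bmat_psd:
  fixes W :: "real^'n^'n"
  assumes sym: "transpose W = W" and nonneg: "\<And>i j. 0 \<le> W$i$j"
    and stochastic: "W *v onesv = onesv"
  shows "0 \<le> z \<bullet> (Bmat W *v z)"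
proof (rule diagonally_dominant_psd)
  show "transpose (Bmat W) = Bmat W"
    using sym by (rule transpose_Bmat)
  have "(\<Sum>j\<in>-{i}. \<bar>Bmat W$i$j\<bar>) = (\<Sum>j\<in>-{i}. \<bar>W$i$j\<bar>)" for i
    by (intro sum.cong) (auto simp: Bmat_entry)
  then show "(\<Sum>j\<in>-{i}. \<bar>Bmat W$i$j\<bar>) \<le> Bmat W$i$i" for i
    using stochastic_offdiag_sum[OF nonneg stochastic, of i] by (simp add: Bmat_entry)
qed

lemma Bmat_eq_diagm_minus: "Bmat W = diagm (\<chi> i. 2 * (1 - W$i$i)) - (mat 1 - W)"
  by (simp add: vec_eq_iff Bmat_entry diagm_def mat_def)

lemma Bmat_quadratic_form_le:
  fixes W :: "real^'n^'n"
  assumes sym: "transpose W = W" and nonneg: "\<And>i j. 0 \<le> W$i$j"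
    and stochastic: "W *v onesv = onesv"
  shows "z \<bullet> (Bmat W *v z) \<le> (\<Sum>i\<in>UNIV. 2 * (1 - W$i$i) * (z$i)\<^sup>2)"
  using I_minus_stochastic_psd[OF assms, of z]
  by (simp add: Bmat_eq_diagm_minus matrix_vector_mult_diff_rdistrib inner_diff_right inner_diagm)

text \<open>With \<open>c = \<alpha> f''\<^sub>i\<close> and \<open>a = 2 (1 - W\<^sub>i\<^sub>i)\<close>, the left-hand side is the
  diagonal bound \<open>1/d\<^sub>i + a/d\<^sub>i\<^sup>2\<close> on \<open>Hhat_inv\<close> obtained from \<open>B \<le> 2 (I - W\<^sub>d)\<close>;
  the right-hand side is the paper's \<open>\<Lambda>\<close>.\<close>

lemma reciprocal_plus_ratio_le:
  fixes a c a_min a_max c_min :: real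
  assumes c: "0 < c_min" "c_min \<le> c" and a: "0 < a_min" "a_min \<le> a" "a \<le> a_max"
  shows "1 / (c + a) + a / (c + a)\<^sup>2 \<le> (1 + a_max / (a_max + c_min)) / (a_min + c_min)"
proof -
  have "a * c_min \<le> a_max * c" using c a by (intro mult_mono) auto
  then have ratio: "a / (c + a) \<le> a_max / (a_max + c_min)"
    using c a by (simp add: divide_simps algebra_simps)
  have "1 / (c + a) + a / (c + a)\<^sup>2 = (1 / (c + a)) * (1 + a / (c + a))"
    by (simp add: power2_eq_square distrib_left)
  also have "\<dots> \<le> (1 / (a_min + c_min)) * (1 + a_max / (a_max + c_min))"
    using c a ratio by (intro mult_mono divide_left_mono add_left_mono) auto
  finally show ?thesis by simp
qed

lemma expectation_bind_pmf_le:
  fixes p :: "'a pmf" and K :: "'a \<Rightarrow> 'b pmf" and \<phi> :: "'b \<Rightarrow> real"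
  assumes fin: "finite (set_pmf p)" "\<And>x. finite (set_pmf (K x))"
    and le: "\<And>x. x \<in> set_pmf p \<Longrightarrow> measure_pmf.expectation (K x) \<phi> \<le> \<psi> x"
  shows "measure_pmf.expectation (bind_pmf p K) \<phi> \<le> measure_pmf.expectation p \<psi>"
proof -
  have "measure_pmf.expectation (bind_pmf p K) \<phi>
      = (\<Sum>x\<in>set_pmf p. pmf p x * measure_pmf.expectation (K x) \<phi>)"
    using fin by (subst pmf_expectation_bind[of "set_pmf p"]) auto
  also have "\<dots> \<le> (\<Sum>x\<in>set_pmf p. pmf p x * \<psi> x)"
    using le by (intro sum_mono mult_left_mono) auto
  also have "\<dots> = measure_pmf.expectation p \<psi>"
    using fin by (subst integral_measure_pmf[of "set_pmf p"]) auto
  finally show ?thesis .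
qed

lemma finite_set_pmf_ann_dist: "finite (set_pmf (ann_dist W \<alpha> f1 f2 \<epsilon> x0 t))"
  by (induction t) (auto simp: set_bind_pmf)

locale network_newton =
  fixes W :: "real^'n::finite^'n" and \<alpha> \<delta> \<Delta> m M :: real
    and f f1 f2 :: "'n \<Rightarrow> real \<Rightarrow> real"
  assumes W_sym: "transpose W = W"
    and W_nonneg: "\<And>i j. 0 \<le> W $ i $ j"
    and W_stochastic: "W *v onesv = onesv"
    and delta: "0 < \<delta>" "\<delta> \<le> \<Delta>" "\<Delta> < 1"
    and W_diag_bounds: "\<And>i. \<delta> \<le> W $ i $ i \<and> W $ i $ i \<le> \<Delta>"
    and alpha_pos: "0 < \<alpha>"
    and curvature: "0 < m" "m \<le> M"
    and f_deriv: "\<And>i s. (f i has_real_derivative f1 i s) (at s)"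
    and f1_deriv: "\<And>i s. (f1 i has_real_derivative f2 i s) (at s)"
    and f2_bounds: "\<And>i s. m \<le> f2 i s \<and> f2 i s \<le> M"
begin

abbreviation F :: "real^'n \<Rightarrow> real" where "F \<equiv> Fobj W \<alpha> f"
abbreviation grad :: "real^'n \<Rightarrow> real^'n" where "grad \<equiv> gradF W \<alpha> f1"
abbreviation Hinv :: "real^'n \<Rightarrow> real^'n^'n" where "Hinv \<equiv> Hhat_inv W \<alpha> f2"
abbreviation lam :: real where "lam \<equiv> lambda_c \<delta> \<alpha> M"
abbreviation Lam :: real where "Lam \<equiv> Lambda_c \<delta> \<Delta> \<alpha> m"

lemma alpha_m_pos: "0 < \<alpha> * m"
  using alpha_pos curvature by simp

lemma lam_pos: "0 < lam"
proof -
  have "0 < 2 * (1 - \<delta>) + \<alpha> * M"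
    using delta alpha_m_pos alpha_pos curvature by (smt (verit) mult_left_mono)
  then show ?thesis by (simp add: lambda_c_def)
qed

lemma Lam_pos: "0 < Lam"
proof -
  have "0 \<le> rho_c \<delta> \<alpha> m"
    using delta alpha_m_pos by (simp add: rho_c_def)
  moreover have "0 < 2 * (1 - \<Delta>) + \<alpha> * m"
    using delta alpha_m_pos by simp
  ultimately show ?thesis by (simp add: Lambda_c_def)
qed

lemma Dvec_bounds:
  "\<alpha> * m + 2 * (1 - \<Delta>) \<le> Dvec W \<alpha> f2 x $ i"
  "Dvec W \<alpha> f2 x $ i \<le> \<alpha> * M + 2 * (1 - \<delta>)"
proof -
  have "\<alpha> * m \<le> \<alpha> * f2 i (x$i)" "\<alpha> * f2 i (x$i) \<le> \<alpha> * M"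
    using f2_bounds[of i "x$i"] alpha_pos by simp_all
  then show "\<alpha> * m + 2 * (1 - \<Delta>) \<le> Dvec W \<alpha> f2 x $ i"
    and "Dvec W \<alpha> f2 x $ i \<le> \<alpha> * M + 2 * (1 - \<delta>)"
    using W_diag_bounds[of i] by (auto simp: Dvec_def)
qed

lemma Dvec_pos: "0 < Dvec W \<alpha> f2 x $ i"
proof -
  have "0 < \<alpha> * m + 2 * (1 - \<Delta>)"
    using alpha_m_pos delta(3) by simp
  then show ?thesis
    using Dvec_bounds(1) by (rule less_le_trans)
qed

lemma Hinv_eq_sandwich:
  "Hinv x = P ** (mat 1 + P ** Bmat W ** P) ** P"
  if "P = diagm (\<chi> i. 1 / sqrt (Dvec W \<alpha> f2 x $ i))"
  using that by (simp add: Hhat_inv_def Dinvsqrt_def)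

lemma Hinv_symmetric: "transpose (Hinv x) = Hinv x"
  using transpose_Bmat[OF W_sym] by (simp add: Hinv_eq_sandwich transpose_sandwich)

lemma Hinv_quadratic_form:
  fixes x v :: "real^'n"
  defines "d \<equiv> Dvec W \<alpha> f2 x"
  shows "v \<bullet> (Hinv x *v v)
    = (\<Sum>i\<in>UNIV. (v$i)\<^sup>2 / d$i) + (\<chi> i. v$i / d$i) \<bullet> (Bmat W *v (\<chi> i. v$i / d$i))"
  unfolding d_def Hinv_eq_sandwich[OF refl]
  by (rule sandwich_quadratic_form[OF Dvec_pos transpose_Bmat[OF W_sym]])

lemma Hinv_lower: "lam * (v \<bullet> v) \<le> v \<bullet> (Hinv x *v v)"
proof -
  define d where "d = Dvec W \<alpha> f2 x"
  have "lam * (v \<bullet> v) = (\<Sum>i\<in>UNIV. (v$i)\<^sup>2 * lam)"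
    by (simp add: inner_vec_def power2_eq_square sum_distrib_left mult_ac)
  also have "\<dots> \<le> (\<Sum>i\<in>UNIV. (v$i)\<^sup>2 / d$i)"
  proof (rule sum_mono)
    fix i
    have "1 / (2 * (1 - \<delta>) + \<alpha> * M) \<le> 1 / d$i"
      using Dvec_bounds(2)[of x i] Dvec_pos[of x i] unfolding d_def
      by (intro divide_left_mono) auto
    then have "lam \<le> 1 / d$i"
      by (simp add: lambda_c_def)
    then show "(v$i)\<^sup>2 * lam \<le> (v$i)\<^sup>2 / d$i"
      by (metis mult_left_mono times_divide_eq_right mult_1_right zero_le_power2)
  qed
  also have "\<dots> \<le> v \<bullet> (Hinv x *v v)"
    using Hinv_quadratic_form[where x=x and v=v] Bmat_psd[OF W_sym W_nonneg W_stochastic]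
    by (simp add: d_def)
  finally show ?thesis .
qed

lemma Hinv_upper: "v \<bullet> (Hinv x *v v) \<le> Lam * (v \<bullet> v)"
proof -
  define d where "d = Dvec W \<alpha> f2 x"
  have "v \<bullet> (Hinv x *v v)
      \<le> (\<Sum>i\<in>UNIV. (v$i)\<^sup>2 / d$i) + (\<Sum>i\<in>UNIV. 2 * (1 - W$i$i) * (v$i / d$i)\<^sup>2)"
    using Hinv_quadratic_form[where x=x and v=v]
      Bmat_quadratic_form_le[OF W_sym W_nonneg W_stochastic, of "\<chi> i. v$i / d$i"]
    by (simp add: d_def)
  also have "\<dots> = (\<Sum>i\<in>UNIV. (v$i)\<^sup>2 * (1 / d$i + 2 * (1 - W$i$i) / (d$i)\<^sup>2))"
    by (simp add: sum.distrib[symmetric] power_divide field_simps)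
  also have "\<dots> \<le> (\<Sum>i\<in>UNIV. (v$i)\<^sup>2 * Lam)"
  proof (intro sum_mono mult_left_mono)
    fix i
    have d: "d$i = \<alpha> * f2 i (x$i) + 2 * (1 - W$i$i)"
      by (simp add: d_def Dvec_def)
    have "\<alpha> * m \<le> \<alpha> * f2 i (x$i)"
      using f2_bounds[of i "x$i"] alpha_pos by simp
    then show "1 / d$i + 2 * (1 - W$i$i) / (d$i)\<^sup>2 \<le> Lam"
      unfolding d Lambda_c_def rho_c_def using W_diag_bounds[of i] alpha_m_pos delta
      by (intro reciprocal_plus_ratio_le) auto
  qed simp
  also have "\<dots> = Lam * (v \<bullet> v)"
    by (simp add: inner_vec_def power2_eq_square sum_distrib_left mult_ac)
  finally show ?thesis .
qed

lemma Hinv_psd: "0 \<le> v \<bullet> (Hinv x *v v)"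
  using Hinv_lower[of v x] lam_pos by (smt (verit) inner_ge_zero mult_nonneg_nonneg)

lemma Hinv_mult_vector_norm_le: "(Hinv x *v v) \<bullet> (Hinv x *v v) \<le> Lam\<^sup>2 * (v \<bullet> v)"
  by (rule psd_matrix_vector_norm_le[OF Hinv_symmetric Hinv_psd Hinv_upper])

lemma F_add_eq:
  "F (x + h) = F x + grad x \<bullet> h + 1/2 * (h \<bullet> ((mat 1 - W) *v h))
     + \<alpha> * (\<Sum>i\<in>UNIV. f i (x$i + h$i) - f i (x$i) - f1 i (x$i) * h$i)"
proof -
  define Q where "Q = mat 1 - W"
  have "x \<bullet> (Q *v h) = (Q *v x) \<bullet> h"
    unfolding Q_def by (rule inner_symmetric_matrix[OF transpose_I_minus[OF W_sym]])
  then have quadratic: "(x + h) \<bullet> (Q *v (x + h)) = x \<bullet> (Q *v x) + 2 * ((Q *v x) \<bullet> h) + h \<bullet> (Q *v h)"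
    by (simp add: matrix_vector_right_distrib inner_add_left inner_add_right inner_commute)
  have linear: "grad x \<bullet> h = (Q *v x) \<bullet> h + \<alpha> * (\<Sum>i\<in>UNIV. f1 i (x$i) * h$i)"
    unfolding Q_def
    by (simp add: gradF_def inner_add_left inner_vec_def sum_distrib_left sum.distrib
        distrib_left mult_ac)
  show ?thesis
    unfolding Fobj_def Q_def[symmetric] quadratic linear
    by (simp add: sum_subtractf sum.distrib algebra_simps)
qed

lemma F_quadratic_bounds:
  shows "F x + grad x \<bullet> h + 1/2 * (h \<bullet> ((mat 1 - W) *v h)) + \<alpha> * m / 2 * (h \<bullet> h) \<le> F (x + h)"
    and "F (x + h) \<le> F x + grad x \<bullet> h + 1/2 * (h \<bullet> ((mat 1 - W) *v h)) + \<alpha> * M / 2 * (h \<bullet> h)"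
proof -
  have coordinate: "m / 2 * (h$i)\<^sup>2 \<le> f i (x$i + h$i) - f i (x$i) - f1 i (x$i) * h$i"
    "f i (x$i + h$i) - f i (x$i) - f1 i (x$i) * h$i \<le> M / 2 * (h$i)\<^sup>2" for i
    using quadratic_taylor_bounds[OF f_deriv[of i] f1_deriv[of i] f2_bounds[of i],
        where x="x$i" and y="x$i + h$i"]
    by simp_all
  have "m / 2 * (h \<bullet> h) \<le> (\<Sum>i\<in>UNIV. f i (x$i + h$i) - f i (x$i) - f1 i (x$i) * h$i)"
    unfolding inner_vec_def sum_distrib_left
    by (intro sum_mono) (use coordinate(1) in \<open>simp add: power2_eq_square\<close>)
  moreover have "(\<Sum>i\<in>UNIV. f i (x$i + h$i) - f i (x$i) - f1 i (x$i) * h$i) \<le> M / 2 * (h \<bullet> h)"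
    unfolding inner_vec_def sum_distrib_left
    by (intro sum_mono) (use coordinate(2) in \<open>simp add: power2_eq_square\<close>)
  ultimately show "F x + grad x \<bullet> h + 1/2 * (h \<bullet> ((mat 1 - W) *v h)) + \<alpha> * m / 2 * (h \<bullet> h) \<le> F (x + h)"
    and "F (x + h) \<le> F x + grad x \<bullet> h + 1/2 * (h \<bullet> ((mat 1 - W) *v h)) + \<alpha> * M / 2 * (h \<bullet> h)"
    using alpha_pos unfolding F_add_eq by (auto dest: mult_left_mono[of _ _ \<alpha>])
qed

text \<open>Minimising the strongly convex lower model of \<open>F\<close> over the step \<open>h\<close>.\<close>

lemma F_lower_bound: "F x - grad x \<bullet> grad x / (2 * \<alpha> * m) \<le> F y"
proof -
  define g h where "g = grad x" and "h = y - x"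
  have "- (g \<bullet> g / (2 * \<alpha> * m)) \<le> g \<bullet> h + \<alpha> * m / 2 * (h \<bullet> h)"
  proof -
    have "0 \<le> \<alpha> * m / 2 * ((h + (1 / (\<alpha> * m)) *\<^sub>R g) \<bullet> (h + (1 / (\<alpha> * m)) *\<^sub>R g))"
      using alpha_m_pos by simp
    also have "\<dots> = \<alpha> * m / 2 * (h \<bullet> h) + g \<bullet> h + g \<bullet> g / (2 * \<alpha> * m)"
      using alpha_pos curvature(1)
      by (simp add: inner_add_left inner_add_right inner_commute field_simps power2_eq_square)
    finally show ?thesis by simp
  qed
  moreover have "0 \<le> h \<bullet> ((mat 1 - W) *v h)"
    by (rule I_minus_stochastic_psd[OF W_sym W_nonneg W_stochastic])
  ultimately show ?thesis
    using F_quadratic_bounds(1)[of x h] by (simp add: g_def h_def)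
qed

lemma polyak_lojasiewicz: "2 * \<alpha> * m * (F x - Fstar W \<alpha> f) \<le> grad x \<bullet> grad x"
proof -
  have "F x - grad x \<bullet> grad x / (2 * \<alpha> * m) \<le> Fstar W \<alpha> f"
    unfolding Fstar_def by (rule cINF_greatest) (auto intro: F_lower_bound)
  then have "F x - Fstar W \<alpha> f \<le> grad x \<bullet> grad x / (2 * \<alpha> * m)"
    by simp
  then show ?thesis
    using alpha_m_pos by (simp add: pos_le_divide_eq mult_ac)
qed

lemma ann_step_eq:
  "ann_step W \<alpha> f1 f2 \<epsilon> i x = x + (- \<epsilon> * (Hinv x *v grad x)$i) *\<^sub>R axis i 1"
  by (simp add: ann_step_def Phi_mult_vector)

lemma coordinate_step_le:
  "F (ann_step W \<alpha> f1 f2 \<epsilon> i x)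
     \<le> F x - \<epsilon> * (Hinv x *v grad x)$i * grad x $ i
       + \<epsilon>\<^sup>2 / (2 * lam) * ((Hinv x *v grad x)$i)\<^sup>2"
proof -
  define s where "s = - \<epsilon> * (Hinv x *v grad x)$i"
  define h :: "real^'n" where "h = s *\<^sub>R axis i 1"
  have Qh: "h \<bullet> ((mat 1 - W) *v h) = s\<^sup>2 * (1 - W$i$i)"
    unfolding h_def inner_scaled_axis_matrix_vector by (simp add: mat_def)
  have gh: "grad x \<bullet> h = s * grad x $ i" and hh: "h \<bullet> h = s\<^sup>2"
    by (simp_all add: h_def inner_axis inner_axis_axis power2_eq_square)
  have "F (x + h) \<le> F x + grad x \<bullet> h + 1/2 * (h \<bullet> ((mat 1 - W) *v h)) + \<alpha> * M / 2 * (h \<bullet> h)"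
    by (rule F_quadratic_bounds(2))
  also have "\<dots> = F x + s * grad x $ i + s\<^sup>2 / 2 * (1 - W$i$i + \<alpha> * M)"
    unfolding Qh gh hh by (simp add: algebra_simps)
  \<comment> \<open>the crude bound \<open>1 - W\<^sub>i\<^sub>i \<le> 2 (1 - \<delta>)\<close> is what produces the constant \<open>\<lambda>\<close>\<close>
  also have "\<dots> \<le> F x + s * grad x $ i + s\<^sup>2 / 2 * (2 * (1 - \<delta>) + \<alpha> * M)"
    using W_diag_bounds[of i] delta by (intro add_left_mono mult_left_mono) auto
  also have "\<dots> = F x + s * grad x $ i + s\<^sup>2 / (2 * lam)"
    by (simp add: lambda_c_def)
  finally show ?thesis
    by (simp add: ann_step_eq h_def s_def power_mult_distrib)
qed

lemma sum_coordinate_steps_le: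
  assumes "0 \<le> \<epsilon>"
  shows "(\<Sum>i\<in>UNIV. F (ann_step W \<alpha> f1 f2 \<epsilon> i x))
    \<le> CARD('n) * F x - (\<epsilon> * lam - \<epsilon>\<^sup>2 / (2 * lam) * Lam\<^sup>2) * (grad x \<bullet> grad x)"
proof -
  define g d where "g = grad x" and "d = Hinv x *v grad x"
  have "(\<Sum>i\<in>UNIV. F (ann_step W \<alpha> f1 f2 \<epsilon> i x))
      \<le> (\<Sum>i\<in>UNIV. F x - \<epsilon> * d$i * g$i + \<epsilon>\<^sup>2 / (2 * lam) * (d$i)\<^sup>2)"
    unfolding g_def d_def by (intro sum_mono coordinate_step_le)
  also have "\<dots> = CARD('n) * F x - \<epsilon> * (g \<bullet> d) + \<epsilon>\<^sup>2 / (2 * lam) * (d \<bullet> d)"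
    by (simp add: sum.distrib sum_subtractf sum_distrib_left sum_divide_distrib inner_vec_def
        power2_eq_square mult_ac)
  also have "\<dots> \<le> CARD('n) * F x - \<epsilon> * (lam * (g \<bullet> g)) + \<epsilon>\<^sup>2 / (2 * lam) * (Lam\<^sup>2 * (g \<bullet> g))"
    using Hinv_lower[of g x] Hinv_mult_vector_norm_le[of x g] lam_pos assms
    by (intro add_mono diff_mono mult_left_mono) (auto simp: g_def d_def)
  finally show ?thesis
    by (simp add: g_def algebra_simps)
qed

definition contraction_rate :: "real \<Rightarrow> real" where
  "contraction_rate \<epsilon> = \<alpha> * m * \<epsilon> * (2 * lam\<^sup>2 - \<epsilon> * Lam\<^sup>2) / (CARD('n) * lam)"

lemma expected_step_gap_le:
  assumes eps: "0 \<le> \<epsilon>" "\<epsilon> * Lam\<^sup>2 \<le> 2 * lam\<^sup>2"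
  shows "measure_pmf.expectation (map_pmf (\<lambda>i. ann_step W \<alpha> f1 f2 \<epsilon> i x) (pmf_of_set UNIV))
      (\<lambda>y. F y - Fstar W \<alpha> f) \<le> (1 - contraction_rate \<epsilon>) * (F x - Fstar W \<alpha> f)"
proof -
  define n \<kappa> gap where "n = real CARD('n)"
    and "\<kappa> = \<epsilon> * lam - \<epsilon>\<^sup>2 / (2 * lam) * Lam\<^sup>2" and "gap = F x - Fstar W \<alpha> f"
  have \<kappa>_nonneg: "0 \<le> \<kappa>"
    using eps lam_pos by (simp add: \<kappa>_def field_simps power2_eq_square mult_left_mono)
  have "measure_pmf.expectation (map_pmf (\<lambda>i. ann_step W \<alpha> f1 f2 \<epsilon> i x) (pmf_of_set UNIV))
      (\<lambda>y. F y - Fstar W \<alpha> f) = (\<Sum>i\<in>UNIV. F (ann_step W \<alpha> f1 f2 \<epsilon> i x) - Fstar W \<alpha> f) / n"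
    by (simp add: integral_pmf_of_set n_def)
  also have "\<dots> \<le> (n * gap - \<kappa> * (grad x \<bullet> grad x)) / n"
    using sum_coordinate_steps_le[OF eps(1), of x]
    by (intro divide_right_mono) (auto simp: sum_subtractf n_def gap_def \<kappa>_def algebra_simps)
  also have "\<dots> \<le> (n * gap - \<kappa> * (2 * \<alpha> * m * gap)) / n"
    using polyak_lojasiewicz[of x] \<kappa>_nonneg
    by (intro divide_right_mono diff_mono mult_left_mono) (auto simp: gap_def n_def)
  also have "\<dots> = (1 - contraction_rate \<epsilon>) * gap"
    using lam_pos by (simp add: contraction_rate_def n_def \<kappa>_def field_simps power2_eq_square)
  finally show ?thesis
    by (simp add: gap_def)
qed

lemma expected_gap_le:
  assumes eps: "0 \<le> \<epsilon>" "\<epsilon> * Lam\<^sup>2 \<le> 2 * lam\<^sup>2" and rate: "contraction_rate \<epsilon> \<le> 1"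
  shows "measure_pmf.expectation (ann_dist W \<alpha> f1 f2 \<epsilon> x0 t) (\<lambda>x. F x - Fstar W \<alpha> f)
    \<le> (1 - contraction_rate \<epsilon>) ^ t * (F x0 - Fstar W \<alpha> f)"
proof (induction t)
  case (Suc t)
  let ?gap = "\<lambda>x. F x - Fstar W \<alpha> f"
  have "measure_pmf.expectation (ann_dist W \<alpha> f1 f2 \<epsilon> x0 (Suc t)) ?gap
      \<le> measure_pmf.expectation (ann_dist W \<alpha> f1 f2 \<epsilon> x0 t) (\<lambda>x. (1 - contraction_rate \<epsilon>) * ?gap x)"
    unfolding ann_dist.simps
    by (rule expectation_bind_pmf_le[OF finite_set_pmf_ann_dist _ expected_step_gap_le[OF eps]])
      simp
  also have "\<dots> \<le> (1 - contraction_rate \<epsilon>) ^ Suc t * (F x0 - Fstar W \<alpha> f)"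
    using mult_left_mono[OF Suc.IH, of "1 - contraction_rate \<epsilon>"] rate by (simp add: mult.assoc)
  finally show ?case .
qed simp

lemma contraction_rate_bounds:
  assumes n: "2 \<le> CARD('n)" and eps: "0 < \<epsilon>" "\<epsilon> < 1" "\<epsilon> * Lam\<^sup>2 < 2 * lam\<^sup>2"
  shows "0 < contraction_rate \<epsilon>" and "contraction_rate \<epsilon> < 1"
proof -
  show "0 < contraction_rate \<epsilon>"
    using alpha_m_pos lam_pos eps by (simp add: contraction_rate_def)
  have "\<alpha> * m < 2 * (1 - \<delta>) + \<alpha> * M"
    using delta alpha_pos curvature by (smt (verit) mult_left_mono)
  then have "\<alpha> * m * lam < 1"
    using lam_pos by (simp add: lambda_c_def field_simps)
  then have "\<epsilon> * (\<alpha> * m * lam) < 1"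
    using eps alpha_m_pos lam_pos by (smt (verit) mult_less_cancel_right2 mult_pos_pos)
  have "contraction_rate \<epsilon> \<le> \<alpha> * m * \<epsilon> * (2 * lam\<^sup>2) / (CARD('n) * lam)"
    unfolding contraction_rate_def using alpha_m_pos eps lam_pos Lam_pos
    by (intro divide_right_mono mult_left_mono) auto
  also have "\<dots> = 2 * (\<epsilon> * (\<alpha> * m * lam)) / CARD('n)"
    using lam_pos by (simp add: power2_eq_square field_simps)
  also have "\<dots> < 1"
    using \<open>\<epsilon> * (\<alpha> * m * lam) < 1\<close> n by (simp add: field_simps)
  finally show "contraction_rate \<epsilon> < 1" .
qed

end

theorem theorem4p5:
  fixes W :: "real^'n::finite^'n"
    and \<alpha> \<delta> \<Delta> m M L \<epsilon> :: real
    and f f1 f2 :: "'n \<Rightarrow> real \<Rightarrow> real"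
    and x0 :: "real^'n"
  assumes n2: "CARD('n) \<ge> 2"
    and alpha: "\<alpha> > 0"
    and Wsym: "transpose W = W"
    and Wnonneg: "\<And>i j. 0 \<le> W $ i $ j"
    and Wlt1: "\<And>i j. W $ i $ j < 1"
    and Wstoch: "W *v onesv = onesv"
    and Wnull: "{x. (mat 1 - W) *v x = 0} = span {onesv}"
    and delta: "0 < \<delta>" "\<delta> \<le> \<Delta>" "\<Delta> < 1"
    and Wdiag_bd: "\<And>i. \<delta> \<le> W $ i $ i \<and> W $ i $ i \<le> \<Delta>"
    and f_deriv: "\<And>i s. (f i has_real_derivative f1 i s) (at s)"
    and f1_deriv: "\<And>i s. (f1 i has_real_derivative f2 i s) (at s)"
    and f2_cont: "\<And>i. continuous_on UNIV (f2 i)"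
    and mM: "0 < m" "m \<le> M"
    and f2_bd: "\<And>i s. m \<le> f2 i s \<and> f2 i s \<le> M"
    and f2_lip: "\<And>i a b. \<bar>f2 i a - f2 i b\<bar> \<le> L * \<bar>a - b\<bar>"
    and eps: "0 < \<epsilon>" "\<epsilon> < 1"
      "\<epsilon> < 2 * (lambda_c \<delta> \<alpha> M / Lambda_c \<delta> \<Delta> \<alpha> m)\<^sup>2"
  shows "\<forall>t. measure_pmf.expectation (ann_dist W \<alpha> f1 f2 \<epsilon> x0 t)
               (\<lambda>x. Fobj W \<alpha> f x - Fstar W \<alpha> f)
           \<le> (1 - \<alpha> * m * \<epsilon> * (2 * (lambda_c \<delta> \<alpha> M)\<^sup>2 - \<epsilon> * (Lambda_c \<delta> \<Delta> \<alpha> m)\<^sup>2)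
                  / (real CARD('n) * lambda_c \<delta> \<alpha> M)) ^ t
              * (Fobj W \<alpha> f x0 - Fstar W \<alpha> f)
         \<and> 0 < \<alpha> * m * \<epsilon> * (2 * (lambda_c \<delta> \<alpha> M)\<^sup>2 - \<epsilon> * (Lambda_c \<delta> \<Delta> \<alpha> m)\<^sup>2)
                  / (real CARD('n) * lambda_c \<delta> \<alpha> M)
         \<and> \<alpha> * m * \<epsilon> * (2 * (lambda_c \<delta> \<alpha> M)\<^sup>2 - \<epsilon> * (Lambda_c \<delta> \<Delta> \<alpha> m)\<^sup>2)
                  / (real CARD('n) * lambda_c \<delta> \<alpha> M) < 1"
proof -
  interpret network_newton W \<alpha> \<delta> \<Delta> m M f f1 f2
    by unfold_locales (fact assms)+
  have eps_Lam: "\<epsilon> * Lam\<^sup>2 < 2 * lam\<^sup>2"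
    using eps(3) Lam_pos by (simp add: power_divide pos_less_divide_eq)
  note rate = contraction_rate_bounds[OF n2 eps(1,2) eps_Lam]
  have "\<forall>t. measure_pmf.expectation (ann_dist W \<alpha> f1 f2 \<epsilon> x0 t) (\<lambda>x. F x - Fstar W \<alpha> f)
      \<le> (1 - contraction_rate \<epsilon>) ^ t * (F x0 - Fstar W \<alpha> f)"
    using expected_gap_le eps(1) eps_Lam rate(2) by simp
  with rate show ?thesis
    unfolding contraction_rate_def by blast
qed

end
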